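(* Let $(X,d)$ be a complete metric space, $N\in\mathbb{N}\setminus\{0\}$, $\alpha:(X\times X)\times(X\times X)\rightarrow[0,+\infty)$ an $N$--transitive mapping on $X\times X$, and $F:X\times X\rightarrow X$ such that for every $\varepsilon>0$ there exists $\delta(\varepsilon)>0$ for which, for all $(x,y),(u,v)\in X\times X$, \[ \varepsilon\leq\tfrac{d(x,u)+d(y,v)}{2}<\varepsilon+\delta(\varepsilon)\Rightarrow\alpha((x,y),(u,v))\,d(F(x,y),F(u,v))<\varepsilon. \] Suppose that: (B1) for all $(x,y),(u,v)\in X\times X$, $\alpha((x,y),(u,v))\geq1$ implies $\alpha((F(x,y),F(y,x)),(F(u,v),F(v,u)))\geq1$; (B2) there exists $(x_{0},y_{0})\in X\times X$ such that $\alpha((x_{0},y_{0}),(F(x_{0},y_{0}),F(y_{0},x_{0})))\geq1$ and $\alpha((F(y_{0},x_{0}),F(x_{0},y_{0})),(y_{0},x_{0}))\geq1$; (B4) for every sequence $\{(x_{n},y_{n})\}$ in $X\times X$ with $x_{n}\rightarrow x\in X$, $y_{n}\rightarrow y\in X$ and $\alpha((x_{n},y_{n}),(x_{n+1},y_{n+1}))\geq1$, $\alpha((y_{n+1},x_{n+1}),(y_{n},x_{n}))\geq1$ for all $n\in\mathbb{N}$, there exists a subsequence $\{(x_{n(k)},y_{n(k)})\}$ with $\alpha((x_{n(k)},y_{n(k)}),(x,y))\geq1$ and $\alpha((y,x),(y_{n(k)},x_{n(k)}))\geq1$ for all $k\in\mathbb{N}$. Then $F$ has a coupled fixed point, i.e.,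 there exists $(x^{\ast},y^{\ast})\in X\times X$ with $x^{\ast}=F(x^{\ast},y^{\ast})$ and $y^{\ast}=F(y^{\ast},x^{\ast})$.
   Context: $\mathbb{N}$ is the set of non-negative integers. For a set $Z$ and $\gamma:Z\times Z\rightarrow[0,+\infty)$, $\gamma$ is $N$--transitive (on $Z$) if for all $z_0,\dots,z_{N+1}\in Z$ with $\gamma(z_i,z_{i+1})\geq1$ for all $i\in\{0,\dots,N\}$ one has $\gamma(z_0,z_{N+1})\geq1$; here $Z=X\times X$. *)

theory Defs
  imports "HOL-Analysis.Analysis"
begin

definition N_transitive :: "nat \<Rightarrow> ('z \<Rightarrow> 'z \<Rightarrow> real) \<Rightarrow> bool" where
  "N_transitive N \<gamma> \<longleftrightarrow>
     (\<forall>z :: nat \<Rightarrow> 'z. (\<forall>i\<le>N. \<gamma> (z i) (z (Suc i)) \<ge> 1) \<longrightarrow> \<gamma> (z 0) (z (N + 1)) \<ge> 1)"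

end

theory Submission
  imports Defs
begin

text \<open>A coupled fixed point of \<open>F\<close> is a fixed point of \<open>T (x, y) = (F x y, F y x)\<close> on
  \<open>X \<times> X\<close>, equipped with the metric \<open>\<rho> = (d(x,u) + d(y,v)) / 2\<close> and the weight
  \<open>\<gamma>(p, q) = min (\<alpha>(p, q), \<alpha>(swap q, swap p))\<close>; the hypotheses on \<open>F\<close> say that \<open>T\<close> is an
  \<open>\<gamma>\<close>-admissible Meir--Keeler map for \<open>\<rho>\<close>. For such a map the distances between consecutive
  points of an orbit starting at a \<open>\<gamma>\<close>-related pair decrease to 0. By \<open>N\<close>-transitivity every
  point \<open>N\<close> steps ahead is related to the current one, and the Meir--Keeler condition then keeps
  the tail of the orbit in a small ball, so the orbit is Cauchy. Regularity lets the contraction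
  pass to the limit, which is therefore a fixed point.\<close>

locale alpha_meir_keeler = Metric_space UNIV d
  for d :: "'z \<Rightarrow> 'z \<Rightarrow> real" +
  fixes T :: "'z \<Rightarrow> 'z" and \<gamma> :: "'z \<Rightarrow> 'z \<Rightarrow> real" and N :: nat
  assumes N_pos: "N \<noteq> 0"
    and \<gamma>_transitive: "N_transitive N \<gamma>"
    and \<gamma>_admissible: "\<gamma> p q \<ge> 1 \<Longrightarrow> \<gamma> (T p) (T q) \<ge> 1"
    and meir_keeler: "\<epsilon> > 0 \<Longrightarrow> \<exists>\<delta>>0. \<forall>p q.
        \<epsilon> \<le> d p q \<and> d p q < \<epsilon> + \<delta> \<longrightarrow> \<gamma> p q * d (T p) (T q) < \<epsilon>"
begin

lemma d_triangle: "d x z \<le> d x y + d y z"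
  by (rule triangle) auto

lemma dist_T_le_weighted: "\<gamma> p q \<ge> 1 \<Longrightarrow> d (T p) (T q) \<le> \<gamma> p q * d (T p) (T q)"
  using mult_right_mono[of 1 "\<gamma> p q" "d (T p) (T q)"] by simp

lemma dist_T_less:
  assumes "\<gamma> p q \<ge> 1" and "p \<noteq> q"
  shows "d (T p) (T q) < d p q"
proof -
  have "d p q > 0" using assms(2) nonneg[of p q] zero[of p q] by fastforce
  then obtain \<delta> where "\<delta> > 0" and \<delta>: "\<And>p' q'. d p q \<le> d p' q' \<Longrightarrow>
      d p' q' < d p q + \<delta> \<Longrightarrow> \<gamma> p' q' * d (T p') (T q') < d p q"
    using meir_keeler by blast
  with dist_T_le_weighted[OF assms(1)] show ?thesis by force
qed

lemma dist_T_le: "\<gamma> p q \<ge> 1 \<Longrightarrow> d (T p) (T q) \<le> d p q"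
  by (cases "p = q") (auto dest: dist_T_less)

lemma meir_keeler_related:
  assumes "\<epsilon> > 0"
  shows "\<exists>\<delta>>0. \<forall>p q. \<gamma> p q \<ge> 1 \<and> d p q < \<epsilon> + \<delta> \<longrightarrow> d (T p) (T q) < \<epsilon>"
proof -
  obtain \<delta> where "\<delta> > 0" and \<delta>: "\<And>p q. \<epsilon> \<le> d p q \<Longrightarrow> d p q < \<epsilon> + \<delta> \<Longrightarrow>
      \<gamma> p q * d (T p) (T q) < \<epsilon>"
    using meir_keeler[OF assms] by blast
  have "d (T p) (T q) < \<epsilon>" if "\<gamma> p q \<ge> 1" "d p q < \<epsilon> + \<delta>" for p q
  proof (cases "d p q < \<epsilon>")
    case True
    then show ?thesis using dist_T_le[OF that(1)] by linarith
  next
    case False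
    then show ?thesis using \<delta>[OF _ that(2)] dist_T_le_weighted[OF that(1)] by linarith
  qed
  with \<open>\<delta> > 0\<close> show ?thesis by blast
qed

lemma related_funpow: "\<gamma> p q \<ge> 1 \<Longrightarrow> \<gamma> ((T ^^ n) p) ((T ^^ n) q) \<ge> 1"
  by (induction n) (auto intro: \<gamma>_admissible)

lemma dist_funpow_le: "\<gamma> p q \<ge> 1 \<Longrightarrow> d ((T ^^ n) p) ((T ^^ n) q) \<le> d p q"
proof (induction n)
  case (Suc n)
  then show ?case
    using dist_T_le[OF related_funpow[OF Suc.prems, of n]] by (simp add: order_trans)
qed simp

context
  fixes z0 assumes start: "\<gamma> z0 (T z0) \<ge> 1"
begin

abbreviation orbit :: "nat \<Rightarrow> 'z" where "orbit n \<equiv> (T ^^ n) z0"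

lemma orbit_related_Suc: "\<gamma> (orbit n) (orbit (Suc n)) \<ge> 1"
  using related_funpow[OF start, of n] by (simp add: funpow_swap1)

lemma orbit_related_far: "\<gamma> (orbit n) (orbit (n + 1 + j * N)) \<ge> 1"
proof (induction j arbitrary: n)
  case (Suc j)
  define z where "z i = (if i \<le> N then orbit (n + i) else orbit (n + N + 1 + j * N))" for i
  have "\<gamma> (z i) (z (Suc i)) \<ge> 1" if "i \<le> N" for i
    using Suc.IH[of "n + N"] orbit_related_Suc[of "n + i"] that
    by (cases "i = N") (auto simp: z_def add.assoc)
  then have "\<gamma> (z 0) (z (N + 1)) \<ge> 1"
    using \<gamma>_transitive unfolding N_transitive_def by blast
  then show ?case by (simp add: z_def algebra_simps)
qed (use orbit_related_Suc in simp)

lemma orbit_step_decseq: "decseq (\<lambda>n. d (orbit n) (orbit (Suc n)))"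
  unfolding decseq_Suc_iff using dist_T_le[OF orbit_related_Suc] by simp

lemma orbit_step_tendsto_0: "(\<lambda>n. d (orbit n) (orbit (Suc n))) \<longlonglongrightarrow> 0"
proof -
  define c where "c n = d (orbit n) (orbit (Suc n))" for n
  have "decseq c" using orbit_step_decseq unfolding c_def[abs_def] .
  then obtain L where L: "c \<longlonglongrightarrow> L" and L_le: "\<And>n. L \<le> c n"
    using decseq_convergent[of c 0] by (auto simp: c_def)
  have "L \<ge> 0" using L by (rule LIMSEQ_le_const) (auto simp: c_def)
  moreover have "\<not> L > 0"
  proof
    assume "L > 0"
    obtain \<delta> where "\<delta> > 0" and \<delta>: "\<And>p q. \<gamma> p q \<ge> 1 \<Longrightarrow> d p q < L + \<delta> \<Longrightarrow>
        d (T p) (T q) < L"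
      using meir_keeler_related[OF \<open>L > 0\<close>] by meson
    from L \<open>\<delta> > 0\<close> have "\<forall>\<^sub>F n in sequentially. dist (c n) L < \<delta>"
      by (rule tendstoD)
    then obtain n where "dist (c n) L < \<delta>"
      by (auto simp: eventually_sequentially)
    then have "c n < L + \<delta>" by (simp add: dist_real_def)
    then have "c (Suc n) < L"
      using \<delta>[OF orbit_related_Suc[of n]] by (simp add: c_def)
    with L_le[of "Suc n"] show False by linarith
  qed
  ultimately show ?thesis using L by (simp add: c_def[abs_def])
qed

lemma orbit_dist_le: "d (orbit n) (orbit (i + n)) \<le> i * d (orbit n) (orbit (Suc n))"
proof (induction i)
  case (Suc i)
  have "d (orbit (i + n)) (orbit (Suc (i + n))) \<le> d (orbit n) (orbit (Suc n))"
    using decseqD[OF orbit_step_decseq, of n "i + n"] by simp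
  then show ?case
    using Suc.IH d_triangle[of "orbit n" "orbit (Suc i + n)" "orbit (i + n)"]
    by (simp add: algebra_simps)
qed simp

lemma orbit_eventually_close:
  assumes "\<delta> > 0"
  shows "\<exists>k. \<forall>n\<ge>k. \<forall>i\<le>N. d (orbit n) (orbit (i + n)) < \<delta>"
proof -
  have "\<delta> / N > 0" using assms N_pos by simp
  with orbit_step_tendsto_0 have "\<forall>\<^sub>F n in sequentially. dist (d (orbit n) (orbit (Suc n))) 0 < \<delta> / N"
    by (rule tendstoD)
  then obtain k where k: "\<And>n. n \<ge> k \<Longrightarrow> d (orbit n) (orbit (Suc n)) < \<delta> / N"
    by (auto simp: eventually_sequentially)
  have "d (orbit n) (orbit (i + n)) < \<delta>" if "n \<ge> k" "i \<le> N" for n i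
  proof -
    have "d (orbit n) (orbit (i + n)) \<le> N * d (orbit n) (orbit (Suc n))"
      using orbit_dist_le[of n i] that(2)
      by (meson mult_right_mono nonneg of_nat_le_iff order_trans)
    also have "\<dots> < \<delta>"
      using k[OF that(1)] N_pos by (simp add: field_simps)
    finally show ?thesis .
  qed
  then show ?thesis by blast
qed

text \<open>The Meir--Keeler argument: the points \<open>orbit (k + 1 + j * N)\<close>, which are related to
  \<open>orbit k\<close> by \<open>N\<close>-transitivity, never leave the ball of radius \<open>\<epsilon> + \<delta>/2\<close> around it, since
  \<open>N\<close> steps of the map bring them back to within \<open>\<epsilon>\<close> of \<open>orbit (N + k)\<close>.\<close>
lemma orbit_tail_close:
  assumes "\<epsilon> > 0"
  shows "\<exists>k. \<forall>m\<ge>k. d (orbit k) (orbit m) < 2 * \<epsilon>"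
proof -
  obtain \<delta>0 where "\<delta>0 > 0" and \<delta>0: "\<And>p q. \<gamma> p q \<ge> 1 \<Longrightarrow> d p q < \<epsilon> + \<delta>0 \<Longrightarrow>
      d (T p) (T q) < \<epsilon>"
    using meir_keeler_related[OF assms] by auto
  define \<delta> where "\<delta> = min \<delta>0 \<epsilon>"
  have "\<delta> > 0" "\<delta> \<le> \<delta>0" "\<delta> \<le> \<epsilon>" using \<open>\<delta>0 > 0\<close> assms by (auto simp: \<delta>_def)
  then obtain k where k: "\<And>n i. n \<ge> k \<Longrightarrow> i \<le> N \<Longrightarrow> d (orbit n) (orbit (i + n)) < \<delta> / 2"
    using orbit_eventually_close[of "\<delta> / 2"] by auto
  obtain M where M: "N = Suc M" using N_pos not0_implies_Suc by blast
  have far: "d (orbit k) (orbit (k + 1 + j * N)) < \<epsilon> + \<delta> / 2" for j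
  proof (induction j)
    case 0
    then show ?case using k[of k 1] M assms by (simp add: add.commute)
  next
    case (Suc j)
    define a where "a = k + 1 + j * N"
    have related: "\<gamma> (orbit k) (orbit a) \<ge> 1"
      unfolding a_def by (rule orbit_related_far)
    have "d (orbit (Suc k)) (orbit (Suc a)) < \<epsilon>"
      using \<delta>0[OF related] Suc.IH \<open>\<delta> > 0\<close> \<open>\<delta> \<le> \<delta>0\<close> by (simp add: a_def)
    moreover have "d (orbit (N + k)) (orbit (N + a)) \<le> d (orbit (Suc k)) (orbit (Suc a))"
      using dist_funpow_le[OF related_funpow[OF related, of 1], of M]
      by (simp add: M funpow_add funpow_swap1)
    ultimately have "d (orbit (N + k)) (orbit (N + a)) < \<epsilon>" by linarith
    moreover have "d (orbit k) (orbit (N + k)) < \<delta> / 2" using k[of k N] by simp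
    ultimately have "d (orbit k) (orbit (N + a)) < \<epsilon> + \<delta> / 2"
      using d_triangle[of "orbit k" "orbit (N + a)" "orbit (N + k)"] by linarith
    then show ?case by (simp add: a_def algebra_simps)
  qed
  have "d (orbit k) (orbit m) < 2 * \<epsilon>" if "m \<ge> k" for m
  proof (cases "m = k")
    case False
    define j where "j = (m - k - 1) div N"
    define r where "r = (m - k - 1) mod N"
    have "r \<le> N" unfolding r_def using N_pos by (simp add: less_imp_le)
    have m: "m = r + (k + 1 + j * N)"
      using div_mult_mod_eq[of "m - k - 1" N] that False unfolding j_def r_def by linarith
    have "d (orbit k) (orbit m) \<le> d (orbit k) (orbit (k + 1 + j * N)) + d (orbit (k + 1 + j * N)) (orbit m)"
      by (rule d_triangle)
    also have "\<dots> < \<epsilon> + \<delta> / 2 + \<delta> / 2"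
      using far[of j] k[of "k + 1 + j * N" r] \<open>r \<le> N\<close> m by simp
    finally show ?thesis using \<open>\<delta> \<le> \<epsilon>\<close> by simp
  qed (use assms in simp)
  then show ?thesis by blast
qed

lemma orbit_MCauchy: "MCauchy orbit"
  unfolding MCauchy_def
proof (intro conjI allI impI)
  fix \<epsilon> :: real assume "\<epsilon> > 0"
  then obtain k where k: "\<And>m. m \<ge> k \<Longrightarrow> d (orbit k) (orbit m) < 2 * (\<epsilon> / 4)"
    using orbit_tail_close[of "\<epsilon> / 4"] by auto
  have "d (orbit m) (orbit n) < \<epsilon>" if "k \<le> m" "k \<le> n" for m n
    using d_triangle[of "orbit m" "orbit n" "orbit k"] k[OF that(1)] k[OF that(2)]
    by (simp add: commute)
  then show "\<exists>k. \<forall>m n. k \<le> m \<longrightarrow> k \<le> n \<longrightarrow> d (orbit m) (orbit n) < \<epsilon>" by blast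
qed simp

lemma fixed_point_of_related_limit:
  fixes r :: "nat \<Rightarrow> nat"
  assumes lim: "limitin mtopology orbit z sequentially"
    and r: "strict_mono r" and related: "\<And>k. \<gamma> (orbit (r k)) z \<ge> 1"
  shows "T z = z"
proof -
  have lim0: "(\<lambda>n. d (orbit n) z) \<longlonglongrightarrow> 0"
    using lim by (simp add: limitin_metric_dist_null)
  have "(\<lambda>k. d (orbit (Suc (r k))) z + d (orbit (r k)) z) \<longlonglongrightarrow> 0 + 0"
    using LIMSEQ_subseq_LIMSEQ[OF LIMSEQ_Suc[OF lim0] r] LIMSEQ_subseq_LIMSEQ[OF lim0 r]
    by (intro tendsto_add) (simp_all add: o_def)
  moreover have "d z (T z) \<le> d (orbit (Suc (r k))) z + d (orbit (r k)) z" for k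
    using d_triangle[of z "T z" "orbit (Suc (r k))"] dist_T_le[OF related[of k]]
    by (simp add: commute)
  ultimately have "d z (T z) \<le> 0"
    by (intro LIMSEQ_le_const) auto
  then show ?thesis using nonneg[of z "T z"] by simp
qed

end

theorem fixed_point_exists:
  assumes "mcomplete"
    and start: "\<gamma> z0 (T z0) \<ge> 1"
    and regular: "\<And>\<sigma> z. limitin mtopology \<sigma> z sequentially \<Longrightarrow>
        (\<forall>n. \<gamma> (\<sigma> n) (\<sigma> (Suc n)) \<ge> 1) \<Longrightarrow> \<exists>r :: nat \<Rightarrow> nat. strict_mono r \<and> (\<forall>k. \<gamma> (\<sigma> (r k)) z \<ge> 1)"
  shows "\<exists>z. T z = z"
proof -
  obtain z where lim: "limitin mtopology (orbit z0) z sequentially"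
    using \<open>mcomplete\<close> orbit_MCauchy[OF start] unfolding mcomplete_def by blast
  moreover have "\<forall>n. \<gamma> (orbit z0 n) (orbit z0 (Suc n)) \<ge> 1"
    using orbit_related_Suc[OF start] by blast
  then obtain r :: "nat \<Rightarrow> nat" where "strict_mono r" "\<And>k. \<gamma> (orbit z0 (r k)) z \<ge> 1"
    using regular[OF lim] by blast
  ultimately show ?thesis using fixed_point_of_related_limit[OF start] by blast
qed

end

text \<open>Not the Euclidean product metric \<open>dist\<close> on \<open>'a \<times> 'a\<close>, but equivalent to it.\<close>
definition mean_dist :: "'a::metric_space \<times> 'a \<Rightarrow> 'a \<times> 'a \<Rightarrow> real" where
  "mean_dist p q = (dist (fst p) (fst q) + dist (snd p) (snd q)) / 2"

lemma mean_dist_le_dist: "mean_dist p q \<le> dist p q"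
  using dist_fst_le[of p q] dist_snd_le[of p q] by (simp add: mean_dist_def)

lemma dist_le_mean_dist: "dist p q \<le> 2 * mean_dist p q"
  using sqrt_sum_squares_le_sum[OF zero_le_dist zero_le_dist, of "fst p" "fst q" "snd p" "snd q"]
  by (simp add: dist_prod_def mean_dist_def)

lemma Metric_space_mean_dist: "Metric_space UNIV mean_dist"
proof
  show "mean_dist p q = 0 \<longleftrightarrow> p = q" for p q :: "'a \<times> 'a"
    using mean_dist_le_dist[of p q] dist_le_mean_dist[of p q] by auto
  show "mean_dist p r \<le> mean_dist p q + mean_dist q r" for p q r :: "'a \<times> 'a"
    using dist_triangle[of "fst p" "fst r" "fst q"] dist_triangle[of "snd p" "snd r" "snd q"]
    by (simp add: mean_dist_def field_simps)
qed (auto simp: mean_dist_def dist_commute)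

lemma limitin_mean_dist_iff:
  "limitin (Metric_space.mtopology UNIV mean_dist) f l F \<longleftrightarrow> (f \<longlongrightarrow> l) F"
proof -
  have "((\<lambda>x. mean_dist (f x) l) \<longlongrightarrow> 0) F \<longleftrightarrow> ((\<lambda>x. dist (f x) l) \<longlongrightarrow> 0) F"
  proof
    assume lim: "((\<lambda>x. mean_dist (f x) l) \<longlongrightarrow> 0) F"
    show "((\<lambda>x. dist (f x) l) \<longlongrightarrow> 0) F"
      by (rule tendsto_sandwich[OF _ _ tendsto_const tendsto_mult_right_zero[OF lim, of 2]])
        (simp_all add: dist_le_mean_dist)
  next
    assume lim: "((\<lambda>x. dist (f x) l) \<longlongrightarrow> 0) F"
    show "((\<lambda>x. mean_dist (f x) l) \<longlongrightarrow> 0) F"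
      by (rule tendsto_sandwich[OF _ _ tendsto_const lim])
        (simp_all add: mean_dist_le_dist Metric_space.nonneg[OF Metric_space_mean_dist])
  qed
  then show ?thesis
    unfolding Metric_space.limitin_metric_dist_null[OF Metric_space_mean_dist] tendsto_dist_iff[of f l]
    by simp
qed

lemma mcomplete_mean_dist:
  "Metric_space.mcomplete (UNIV :: ('a::complete_space \<times> 'a) set) mean_dist"
  unfolding Metric_space.mcomplete_def[OF Metric_space_mean_dist] limitin_mean_dist_iff
proof (intro allI impI)
  fix \<sigma> :: "nat \<Rightarrow> 'a \<times> 'a"
  assume Cauchy: "Metric_space.MCauchy UNIV mean_dist \<sigma>"
  have "Cauchy \<sigma>"
  proof (rule metric_CauchyI)
    fix \<epsilon> :: real assume "\<epsilon> > 0"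
    then obtain M where M: "\<And>m n. M \<le> m \<Longrightarrow> M \<le> n \<Longrightarrow> mean_dist (\<sigma> m) (\<sigma> n) < \<epsilon> / 2"
      using Cauchy unfolding Metric_space.MCauchy_def[OF Metric_space_mean_dist]
      by (meson half_gt_zero)
    have "dist (\<sigma> m) (\<sigma> n) < \<epsilon>" if "M \<le> m" "M \<le> n" for m n
      using M[OF that] dist_le_mean_dist[of "\<sigma> m" "\<sigma> n"] by linarith
    then show "\<exists>M. \<forall>m\<ge>M. \<forall>n\<ge>M. dist (\<sigma> m) (\<sigma> n) < \<epsilon>" by blast
  qed
  then show "\<exists>z. \<sigma> \<longlonglongrightarrow> z" by (simp add: Cauchy_convergent_iff convergent_def)
qed

definition coupled_map :: "('a \<Rightarrow> 'a \<Rightarrow> 'a) \<Rightarrow> 'a \<times> 'a \<Rightarrow> 'a \<times> 'a" where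
  "coupled_map F p = (F (fst p) (snd p), F (snd p) (fst p))"

text \<open>(B2) and (B4) say that certain pairs have \<open>coupled_weight \<alpha>\<close> at least 1; taking the
  minimum makes the Meir--Keeler condition for \<open>mean_dist\<close> follow from the two instances of the
  condition on \<open>F\<close> for a pair and its swapped reversal.\<close>
definition coupled_weight :: "('a \<times> 'a \<Rightarrow> 'a \<times> 'a \<Rightarrow> real) \<Rightarrow> 'a \<times> 'a \<Rightarrow> 'a \<times> 'a \<Rightarrow> real" where
  "coupled_weight \<alpha> p q = min (\<alpha> p q) (\<alpha> (prod.swap q) (prod.swap p))"

lemma coupled_map_swap: "coupled_map F (prod.swap p) = prod.swap (coupled_map F p)"
  by (simp add: coupled_map_def)

lemma coupled_weight_ge_1_iff:
  "coupled_weight \<alpha> p q \<ge> 1 \<longleftrightarrow> \<alpha> p q \<ge> 1 \<and> \<alpha> (prod.swap q) (prod.swap p) \<ge> 1"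
  by (simp add: coupled_weight_def)

lemma N_transitive_coupled_weight:
  assumes "N_transitive N \<alpha>"
  shows "N_transitive N (coupled_weight \<alpha>)"
  unfolding N_transitive_def coupled_weight_ge_1_iff
proof (intro allI impI conjI)
  fix z :: "nat \<Rightarrow> 'a \<times> 'a"
  assume chain: "\<forall>i\<le>N. \<alpha> (z i) (z (Suc i)) \<ge> 1 \<and> \<alpha> (prod.swap (z (Suc i))) (prod.swap (z i)) \<ge> 1"
  then show "\<alpha> (z 0) (z (N + 1)) \<ge> 1"
    using assms unfolding N_transitive_def by blast
  have "\<alpha> (prod.swap (z (N + 1 - i))) (prod.swap (z (N + 1 - Suc i))) \<ge> 1" if "i \<le> N" for i
    using chain[rule_format, of "N - i"] that by (simp add: Suc_diff_le)
  then show "\<alpha> (prod.swap (z (N + 1))) (prod.swap (z 0)) \<ge> 1"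
    using assms unfolding N_transitive_def
    by (auto dest: spec[of _ "\<lambda>i. prod.swap (z (N + 1 - i))"])
qed

lemma coupled_weight_admissible:
  assumes "\<And>p q. \<alpha> p q \<ge> 1 \<Longrightarrow> \<alpha> (coupled_map F p) (coupled_map F q) \<ge> 1"
    and "coupled_weight \<alpha> p q \<ge> 1"
  shows "coupled_weight \<alpha> (coupled_map F p) (coupled_map F q) \<ge> 1"
  using assms by (simp add: coupled_weight_ge_1_iff flip: coupled_map_swap)

lemma coupled_meir_keeler:
  assumes "\<exists>\<delta>>0. \<forall>x y u v.
      \<epsilon> \<le> (dist x u + dist y v) / 2 \<and> (dist x u + dist y v) / 2 < \<epsilon> + \<delta> \<longrightarrow>
      \<alpha> (x, y) (u, v) * dist (F x y) (F u v) < \<epsilon>"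
  shows "\<exists>\<delta>>0. \<forall>p q. \<epsilon> \<le> mean_dist p q \<and> mean_dist p q < \<epsilon> + \<delta> \<longrightarrow>
      coupled_weight \<alpha> p q * mean_dist (coupled_map F p) (coupled_map F q) < \<epsilon>"
proof -
  obtain \<delta> where "\<delta> > 0" and contr: "\<forall>x y u v.
      \<epsilon> \<le> (dist x u + dist y v) / 2 \<and> (dist x u + dist y v) / 2 < \<epsilon> + \<delta> \<longrightarrow>
      \<alpha> (x, y) (u, v) * dist (F x y) (F u v) < \<epsilon>"
    using assms by blast
  have "coupled_weight \<alpha> p q * mean_dist (coupled_map F p) (coupled_map F q) < \<epsilon>"
    if close: "\<epsilon> \<le> mean_dist p q" "mean_dist p q < \<epsilon> + \<delta>" for p q
  proof -
    obtain x y u v where p: "p = (x, y)" and q: "q = (u, v)" by (cases p, cases q)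
    define D1 where "D1 = dist (F x y) (F u v)"
    define D2 where "D2 = dist (F v u) (F y x)"
    have "coupled_weight \<alpha> p q * mean_dist (coupled_map F p) (coupled_map F q)
        = (coupled_weight \<alpha> p q * D1 + coupled_weight \<alpha> p q * D2) / 2"
      by (simp add: p q D1_def D2_def mean_dist_def coupled_map_def dist_commute distrib_left)
    also have "\<dots> \<le> (\<alpha> (x, y) (u, v) * D1 + \<alpha> (v, u) (y, x) * D2) / 2"
      unfolding coupled_weight_def p q D1_def D2_def
      by (intro divide_right_mono add_mono mult_right_mono) auto
    also have "\<dots> < \<epsilon>"
      using contr[rule_format, of x u y v] contr[rule_format, of v y u x] close
      by (simp add: p q D1_def D2_def mean_dist_def dist_commute add.commute)
    finally show ?thesis .
  qed
  with \<open>\<delta> > 0\<close> show ?thesis by blast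
qed

lemma alpha_meir_keeler_coupled:
  fixes F :: "'a::metric_space \<Rightarrow> 'a \<Rightarrow> 'a"
  assumes "N \<noteq> 0" and "N_transitive N \<alpha>"
    and admissible: "\<And>x y u v. \<alpha> (x, y) (u, v) \<ge> 1 \<Longrightarrow> \<alpha> (F x y, F y x) (F u v, F v u) \<ge> 1"
    and contr: "\<And>\<epsilon>. \<epsilon> > 0 \<Longrightarrow> \<exists>\<delta>>0. \<forall>x y u v.
        \<epsilon> \<le> (dist x u + dist y v) / 2 \<and> (dist x u + dist y v) / 2 < \<epsilon> + \<delta> \<longrightarrow>
        \<alpha> (x, y) (u, v) * dist (F x y) (F u v) < \<epsilon>"
  shows "alpha_meir_keeler mean_dist (coupled_map F) (coupled_weight \<alpha>) N"
proof (intro alpha_meir_keeler.intro alpha_meir_keeler_axioms.intro Metric_space_mean_dist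
    N_transitive_coupled_weight assms(1,2) coupled_meir_keeler contr)
  show "coupled_weight \<alpha> (coupled_map F p) (coupled_map F q) \<ge> 1"
    if "coupled_weight \<alpha> p q \<ge> 1" for p q
    using admissible that by (intro coupled_weight_admissible) (auto simp: coupled_map_def)
qed

lemma coupled_regular:
  fixes \<sigma> :: "nat \<Rightarrow> 'a::metric_space \<times> 'a"
  assumes regular: "\<And>xs ys x y. xs \<longlonglongrightarrow> x \<Longrightarrow> ys \<longlonglongrightarrow> y \<Longrightarrow>
        (\<forall>n. \<alpha> (xs n, ys n) (xs (Suc n), ys (Suc n)) \<ge> 1 \<and>
             \<alpha> (ys (Suc n), xs (Suc n)) (ys n, xs n) \<ge> 1) \<Longrightarrow>
        \<exists>r :: nat \<Rightarrow> nat. strict_mono r \<and> (\<forall>k. \<alpha> (xs (r k), ys (r k)) (x, y) \<ge> 1 \<and>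
             \<alpha> (y, x) (ys (r k), xs (r k)) \<ge> 1)"
    and lim: "\<sigma> \<longlonglongrightarrow> z" and chain: "\<forall>n. coupled_weight \<alpha> (\<sigma> n) (\<sigma> (Suc n)) \<ge> 1"
  shows "\<exists>r :: nat \<Rightarrow> nat. strict_mono r \<and> (\<forall>k. coupled_weight \<alpha> (\<sigma> (r k)) z \<ge> 1)"
  using regular[OF tendsto_fst[OF lim] tendsto_snd[OF lim]] chain
  by (simp add: coupled_weight_ge_1_iff prod.swap_def)

theorem corollary2:
  fixes N :: nat
    and \<alpha> :: "('a::complete_space \<times> 'a) \<Rightarrow> ('a \<times> 'a) \<Rightarrow> real"
    and F :: "'a \<Rightarrow> 'a \<Rightarrow> 'a"
  assumes N_pos: "N \<noteq> 0"
    and \<alpha>_nonneg: "\<And>p q. \<alpha> p q \<ge> 0"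
    and \<alpha>_trans: "N_transitive N \<alpha>"
    and contr: "\<And>\<epsilon>. \<epsilon> > 0 \<Longrightarrow> \<exists>\<delta>>0. \<forall>x y u v.
        \<epsilon> \<le> (dist x u + dist y v) / 2 \<and> (dist x u + dist y v) / 2 < \<epsilon> + \<delta> \<longrightarrow>
        \<alpha> (x, y) (u, v) * dist (F x y) (F u v) < \<epsilon>"
    and B1: "\<And>x y u v. \<alpha> (x, y) (u, v) \<ge> 1 \<Longrightarrow>
        \<alpha> (F x y, F y x) (F u v, F v u) \<ge> 1"
    and B2: "\<exists>x0 y0. \<alpha> (x0, y0) (F x0 y0, F y0 x0) \<ge> 1 \<and>
        \<alpha> (F y0 x0, F x0 y0) (y0, x0) \<ge> 1"
    and B4: "\<And>xs ys x y. xs \<longlonglongrightarrow> x \<Longrightarrow> ys \<longlonglongrightarrow> y \<Longrightarrow>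
        (\<forall>n. \<alpha> (xs n, ys n) (xs (Suc n), ys (Suc n)) \<ge> 1 \<and>
             \<alpha> (ys (Suc n), xs (Suc n)) (ys n, xs n) \<ge> 1) \<Longrightarrow>
        \<exists>r :: nat \<Rightarrow> nat. strict_mono r \<and> (\<forall>k. \<alpha> (xs (r k), ys (r k)) (x, y) \<ge> 1 \<and>
             \<alpha> (y, x) (ys (r k), xs (r k)) \<ge> 1)"
  shows "\<exists>x y. x = F x y \<and> y = F y x"
proof -
  interpret alpha_meir_keeler mean_dist "coupled_map F" "coupled_weight \<alpha>" N
    using N_pos \<alpha>_trans B1 contr by (rule alpha_meir_keeler_coupled)
  obtain x0 y0 where start: "coupled_weight \<alpha> (x0, y0) (coupled_map F (x0, y0)) \<ge> 1"
    using B2 by (auto simp: coupled_weight_ge_1_iff coupled_map_def)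
  have regular: "\<exists>r :: nat \<Rightarrow> nat. strict_mono r \<and> (\<forall>k. coupled_weight \<alpha> (\<sigma> (r k)) z \<ge> 1)"
    if "limitin mtopology \<sigma> z sequentially" "\<forall>n. coupled_weight \<alpha> (\<sigma> n) (\<sigma> (Suc n)) \<ge> 1"
    for \<sigma> z
    using coupled_regular[where \<alpha> = \<alpha> and \<sigma> = \<sigma> and z = z, OF B4] that
    unfolding limitin_mean_dist_iff by blast
  obtain x y where "coupled_map F (x, y) = (x, y)"
    using fixed_point_exists[OF mcomplete_mean_dist start regular] by auto
  then show ?thesis by (intro exI[of _ x] exI[of _ y]) (simp add: coupled_map_def)
qed

end
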